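(* Let $D$ and $D'$ be finite subsets of $[0,1]\times\mathbb{R}$ (the fitting and external datasets) such that the inputs of all samples in $D\cup D'$ are pairwise distinct. Let $\epsilon>0$. Then there exist a subset $A\subseteq D'$ and $a>0$ such that the TNN constructed from the dataset $D\cup A$ (with parameter $a$) satisfies $|y-TNN(x)|<\epsilon$ for every $(x,y)\in D\cup D'$. In particular, all samples of $D$ remain approximated within $\epsilon$ after the model is rebuilt with the added samples of $A$.
   Context: Let $\sigma(t)=1/(1+e^{-t})$. For a finite dataset $\{(x^{(k)},y^{(k)})\}_{k=1}^N\subset[0,1]\times\mathbb{R}$ with pairwise distinct inputs, index it so that $x^{(1)}>x^{(2)}>\dots>x^{(N)}$. Set $\Delta^{(k)}=x^{(k)}-x^{(k+1)}$ for $k<N$ and let $\Delta^{(N)}>0$ be an arbitrary fixed positive number. For $a>0$ put $W_{N-k+1}=2a/\Delta^{(k)}$, $b_{N-k+1}=a-W_{N-k+1}x^{(k)}$, $\alpha_i=y^{(N-i+1)}-y^{(N-i+2)}$ (with $y^{(N+1)}:=0$), and define the TNN constructed from this dataset as $TNN(x)=\sum_{i=1}^N\alpha_i\sigma(W_ix+b_i)$. *)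

theory Defs
  imports Complex_Main
begin

definition sigmoid :: "real \<Rightarrow> real" where
  "sigmoid t = 1 / (1 + exp (- t))"

text \<open>A dataset is a finite set of samples (x,y) with pairwise distinct inputs.
  Samples are indexed 1..N so that x^(1) > x^(2) > ... > x^(N).\<close>

definition ds_N :: "(real \<times> real) set \<Rightarrow> nat" where
  "ds_N S = card S"

definition ds_x :: "(real \<times> real) set \<Rightarrow> nat \<Rightarrow> real" where
  "ds_x S k = rev (sorted_list_of_set (fst ` S)) ! (k - 1)"

definition ds_y :: "(real \<times> real) set \<Rightarrow> nat \<Rightarrow> real" where
  "ds_y S k = (if 1 \<le> k \<and> k \<le> ds_N S then (THE y. (ds_x S k, y) \<in> S) else 0)"

definition ds_Delta :: "(real \<times> real) set \<Rightarrow> real \<Rightarrow> nat \<Rightarrow> real" where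
  "ds_Delta S dN k = (if k < ds_N S then ds_x S k - ds_x S (k + 1) else dN)"

definition tnn_W :: "(real \<times> real) set \<Rightarrow> real \<Rightarrow> real \<Rightarrow> nat \<Rightarrow> real" where
  "tnn_W S dN a i = 2 * a / ds_Delta S dN (ds_N S - i + 1)"

definition tnn_b :: "(real \<times> real) set \<Rightarrow> real \<Rightarrow> real \<Rightarrow> nat \<Rightarrow> real" where
  "tnn_b S dN a i = a - tnn_W S dN a i * ds_x S (ds_N S - i + 1)"

definition tnn_alpha :: "(real \<times> real) set \<Rightarrow> nat \<Rightarrow> real" where
  "tnn_alpha S i = ds_y S (ds_N S - i + 1) - ds_y S (ds_N S - i + 2)"

definition TNN :: "(real \<times> real) set \<Rightarrow> real \<Rightarrow> real \<Rightarrow> real \<Rightarrow> real" where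
  "TNN S dN a x = (\<Sum>i = 1..ds_N S. tnn_alpha S i * sigmoid (tnn_W S dN a i * x + tnn_b S dN a i))"

end

theory Submission
  imports Defs
begin

text \<open>On the sorted inputs the k-th neuron is a smoothed step: at a sample x^(j) its argument is at
  least a when j \<le> k and at most -a when j > k, because the slope 2a/\<Delta>^(k) carries the gap to the
  next input across 2a. Replacing every sigmoid by the exact step turns TNN(x^(j)) into the
  telescoping sum of the \<alpha>'s, i.e. y^(j); hence the error is at most
  (\<Sum>|\<alpha>|) \<sigma>(-a), which is as small as desired for large a. Taking all external samples,
  A = D', the model interpolates the whole of D \<union> D'.\<close>

lemma ds_N_eq_length:
  assumes "finite S" "inj_on fst S"
  shows "ds_N S = length (rev (sorted_list_of_set (fst ` S)))"
  using assms by (simp add: ds_N_def card_image)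

lemma ds_x_strict_antimono:
  assumes "finite S" "inj_on fst S" "1 \<le> i" "i < j" "j \<le> ds_N S"
  shows "ds_x S j < ds_x S i"
proof -
  let ?xs = "rev (sorted_list_of_set (fst ` S))"
  have "sorted_wrt (>) ?xs"
    by (simp add: sorted_wrt_rev strict_sorted_list_of_set)
  moreover have "j - 1 < length ?xs" using assms ds_N_eq_length[OF assms(1,2)] by simp
  moreover have "i - 1 < j - 1" using assms by simp
  ultimately have "?xs ! (i - 1) > ?xs ! (j - 1)" using sorted_wrt_nth_less by blast
  then show ?thesis by (simp add: ds_x_def)
qed

lemma ds_x_antimono:
  assumes "finite S" "inj_on fst S" "1 \<le> i" "i \<le> j" "j \<le> ds_N S"
  shows "ds_x S j \<le> ds_x S i"
  using ds_x_strict_antimono[OF assms(1,2,3) _ assms(5)] assms(4) by (cases "i = j") auto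

lemma ds_sample_indexed:
  assumes "finite S" "inj_on fst S" "(x, y) \<in> S"
  obtains j where "1 \<le> j" "j \<le> ds_N S" "x = ds_x S j" "y = ds_y S j"
proof -
  let ?xs = "rev (sorted_list_of_set (fst ` S))"
  have "x \<in> set ?xs" using assms by force
  then obtain i where i: "i < length ?xs" "?xs ! i = x" by (metis in_set_conv_nth)
  have j: "1 \<le> Suc i" "Suc i \<le> ds_N S" using i ds_N_eq_length[OF assms(1,2)] by auto
  have x: "x = ds_x S (Suc i)" using i by (simp add: ds_x_def)
  have "(THE y. (ds_x S (Suc i), y) \<in> S) = y"
  proof (rule the_equality)
    show "(ds_x S (Suc i), y) \<in> S" using x assms by simp
    fix y' assume "(ds_x S (Suc i), y') \<in> S"
    with assms(2,3) x show "y' = y" by (metis fst_conv inj_on_def prod.inject)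
  qed
  with j have "y = ds_y S (Suc i)" by (simp add: ds_y_def)
  with j x show thesis by (rule that)
qed

lemma ds_Delta_pos:
  assumes "finite S" "inj_on fst S" "dN > 0" "1 \<le> k" "k \<le> ds_N S"
  shows "ds_Delta S dN k > 0"
  using assms ds_x_strict_antimono[OF assms(1,2), of k "k + 1"] by (auto simp: ds_Delta_def)

lemma sigmoid_mono: "s \<le> t \<Longrightarrow> sigmoid s \<le> sigmoid t"
  unfolding sigmoid_def by (simp add: frac_le add_pos_pos)

lemma sigmoid_pos: "sigmoid t > 0"
  unfolding sigmoid_def by (simp add: add_pos_pos)

lemma one_minus_sigmoid: "1 - sigmoid t = sigmoid (- t)"
proof -
  have pos: "1 + exp t > 0" by (simp add: add_pos_pos)
  then have "1 / (1 + exp (- t)) = exp t / (1 + exp t)"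
    by (simp add: exp_minus field_simps)
  moreover have "exp t / (1 + exp t) + 1 / (1 + exp t) = 1"
    using pos by (simp add: field_simps)
  ultimately show ?thesis unfolding sigmoid_def by simp
qed

lemma sigmoid_neg_le: "a \<ge> 0 \<Longrightarrow> sigmoid (- a) \<le> 1 / (2 + a)"
  using exp_ge_add_one_self[of a] unfolding sigmoid_def by (simp add: frac_le)

lemma TNN_eq_sum_over_samples:
  "TNN S dN a x = (\<Sum>k = 1..ds_N S. (ds_y S k - ds_y S (k + 1)) *
      sigmoid (a + 2 * a / ds_Delta S dN k * (x - ds_x S k)))"
proof -
  let ?N = "ds_N S"
  have "TNN S dN a x = (\<Sum>k = 1..?N. tnn_alpha S (?N + 1 - k) *
      sigmoid (tnn_W S dN a (?N + 1 - k) * x + tnn_b S dN a (?N + 1 - k)))"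
    unfolding TNN_def by (subst sum.atLeastAtMost_rev) simp
  also have "\<dots> = (\<Sum>k = 1..?N. (ds_y S k - ds_y S (k + 1)) *
      sigmoid (a + 2 * a / ds_Delta S dN k * (x - ds_x S k)))"
  proof (rule sum.cong)
    fix k assume "k \<in> {1..?N}"
    then have idx: "?N - (?N + 1 - k) + 1 = k" "?N - (?N + 1 - k) + 2 = k + 1" by auto
    have arg: "2 * a / ds_Delta S dN k * x + (a - 2 * a / ds_Delta S dN k * ds_x S k)
        = a + 2 * a / ds_Delta S dN k * (x - ds_x S k)"
      by (simp add: right_diff_distrib)
    show "tnn_alpha S (?N + 1 - k) *
        sigmoid (tnn_W S dN a (?N + 1 - k) * x + tnn_b S dN a (?N + 1 - k)) =
      (ds_y S k - ds_y S (k + 1)) * sigmoid (a + 2 * a / ds_Delta S dN k * (x - ds_x S k))"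
      unfolding tnn_alpha_def tnn_W_def tnn_b_def idx arg by simp
  qed simp
  finally show ?thesis .
qed

lemma neuron_step_error:
  assumes "finite S" "inj_on fst S" "dN > 0" "a > 0"
    and j: "1 \<le> j" "j \<le> ds_N S" and k: "1 \<le> k" "k \<le> ds_N S"
  shows "\<bar>(if j \<le> k then 1 else 0) - sigmoid (a + 2 * a / ds_Delta S dN k * (ds_x S j - ds_x S k))\<bar>
         \<le> sigmoid (- a)"
proof -
  let ?D = "ds_Delta S dN k"
  let ?z = "a + 2 * a / ?D * (ds_x S j - ds_x S k)"
  have D: "?D > 0" using ds_Delta_pos[OF assms(1-3) k] .
  show ?thesis
  proof (cases "j \<le> k")
    case True
    have "ds_x S k \<le> ds_x S j" using ds_x_antimono[OF assms(1,2) j(1) True k(2)] .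
    with D assms(4) have "a \<le> ?z" by simp
    then have "sigmoid (- ?z) \<le> sigmoid (- a)" by (intro sigmoid_mono) simp
    with True sigmoid_pos[of "- ?z"] show ?thesis by (simp add: one_minus_sigmoid)
  next
    case False
    then have D_gap: "?D = ds_x S k - ds_x S (k + 1)" using j by (simp add: ds_Delta_def)
    have "ds_x S j \<le> ds_x S (k + 1)" using ds_x_antimono[OF assms(1,2), of "k + 1" j] False j by simp
    with D_gap have "ds_x S j - ds_x S k \<le> - ?D" by simp
    then have "2 * a / ?D * (ds_x S j - ds_x S k) \<le> 2 * a / ?D * (- ?D)"
      using D assms(4) by (intro mult_left_mono) simp_all
    with D have "?z \<le> - a" by simp
    then have "sigmoid ?z \<le> sigmoid (- a)" by (rule sigmoid_mono)
    with False sigmoid_pos[of ?z] show ?thesis by simp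
  qed
qed

lemma TNN_interpolation_error:
  assumes "finite S" "inj_on fst S" "dN > 0" "a > 0"
    and j: "1 \<le> j" "j \<le> ds_N S"
  shows "\<bar>ds_y S j - TNN S dN a (ds_x S j)\<bar>
     \<le> (\<Sum>k = 1..ds_N S. \<bar>ds_y S k - ds_y S (k + 1)\<bar>) * sigmoid (- a)"
proof -
  let ?N = "ds_N S" and ?y = "ds_y S"
  define c where "c k = ?y k - ?y (k + 1)" for k
  define z where "z k = a + 2 * a / ds_Delta S dN k * (ds_x S j - ds_x S k)" for k
  define step where "step k = (if j \<le> k then 1 else (0::real))" for k
  have "(\<Sum>k = 1..?N. c k * step k) = (\<Sum>k = j..?N. ?y k - ?y (Suc k))"
    using j by (subst sum.mono_neutral_right[of "{1..?N}" "{j..?N}"])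
      (auto simp: step_def c_def intro: sum.cong)
  also have "\<dots> = - (\<Sum>k = j..?N. ?y (Suc k) - ?y k)"
    by (simp add: sum_negf[symmetric])
  also have "\<dots> = ?y j - ?y (Suc ?N)"
    using sum_Suc_diff[of j ?N ?y] j by simp
  finally have y_telescope: "?y j = (\<Sum>k = 1..?N. c k * step k)"
    by (simp add: ds_y_def)
  have "\<bar>?y j - TNN S dN a (ds_x S j)\<bar> = \<bar>\<Sum>k = 1..?N. c k * (step k - sigmoid (z k))\<bar>"
    unfolding y_telescope TNN_eq_sum_over_samples c_def z_def
    by (simp add: sum_subtractf right_diff_distrib)
  also have "\<dots> \<le> (\<Sum>k = 1..?N. \<bar>c k\<bar> * sigmoid (- a))"
  proof (rule order_trans[OF sum_abs sum_mono])
    fix k assume "k \<in> {1..?N}"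
    then have "\<bar>step k - sigmoid (z k)\<bar> \<le> sigmoid (- a)"
      unfolding step_def z_def using neuron_step_error[OF assms] by auto
    then show "\<bar>c k * (step k - sigmoid (z k))\<bar> \<le> \<bar>c k\<bar> * sigmoid (- a)"
      by (simp add: abs_mult mult_left_mono)
  qed
  finally show ?thesis by (simp add: sum_distrib_right c_def)
qed

lemma exists_small_sigmoid_tail:
  fixes M \<epsilon> :: real
  assumes "M \<ge> 0" "\<epsilon> > 0"
  obtains a where "a > 0" "M * sigmoid (- a) < \<epsilon>"
proof
  let ?a = "M / \<epsilon> + 1"
  show "?a > 0" using assms by (simp add: add_nonneg_pos)
  then have "M * sigmoid (- ?a) \<le> M * (1 / (2 + ?a))"
    using sigmoid_neg_le[of ?a] assms(1) by (intro mult_left_mono) simp_all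
  also have "\<dots> < \<epsilon>"
    using assms \<open>?a > 0\<close> by (simp add: field_simps)
  finally show "M * sigmoid (- ?a) < \<epsilon>" .
qed

theorem TNN_approximates_dataset:
  assumes "finite S" "inj_on fst S" "dN > 0" "\<epsilon> > 0"
  shows "\<exists>a > 0. \<forall>(x, y) \<in> S. \<bar>y - TNN S dN a x\<bar> < \<epsilon>"
proof -
  let ?M = "\<Sum>k = 1..ds_N S. \<bar>ds_y S k - ds_y S (k + 1)\<bar>"
  obtain a where a: "a > 0" "?M * sigmoid (- a) < \<epsilon>"
    using exists_small_sigmoid_tail[of ?M \<epsilon>] assms(4) by (auto intro: sum_nonneg)
  have "\<bar>y - TNN S dN a x\<bar> < \<epsilon>" if xy: "(x, y) \<in> S" for x y
  proof -
    obtain j where "1 \<le> j" "j \<le> ds_N S" "x = ds_x S j" "y = ds_y S j"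
      using ds_sample_indexed[OF assms(1,2) xy] .
    with TNN_interpolation_error[OF assms(1-3) a(1)] a(2) show ?thesis by fastforce
  qed
  with a(1) show ?thesis by blast
qed

theorem proposition2:
  fixes D D' :: "(real \<times> real) set" and \<epsilon> dN :: real
  assumes "finite D" and "finite D'"
    and "D \<subseteq> {0..1} \<times> UNIV" and "D' \<subseteq> {0..1} \<times> UNIV"
    and "inj_on fst (D \<union> D')"
    and "\<epsilon> > 0" and "dN > 0"
  shows "\<exists>A \<subseteq> D'. \<exists>a > 0. \<forall>(x, y) \<in> D \<union> D'. \<bar>y - TNN (D \<union> A) dN a x\<bar> < \<epsilon>"
proof -
  have "\<exists>a > 0. \<forall>(x, y) \<in> D \<union> D'. \<bar>y - TNN (D \<union> D') dN a x\<bar> < \<epsilon>"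
    using assms by (intro TNN_approximates_dataset) simp_all
  then show ?thesis by blast
qed

end
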